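(* There exist infinitely many graphs $G$ that are locally Ore and satisfy $\lambda(G) \ne \delta(G)$.
   Context: $\lambda(G)$ is the edge-connectivity and $\delta(G)$ the minimum degree of $G$. A graph $G$ is locally Ore if for every vertex $v \in V(G)$ and every pair $u,w$ of non-adjacent vertices in $N(v)$, $\deg_{\langle N(v)\rangle}(u) + \deg_{\langle N(v)\rangle}(w) \ge \deg_G(v)$, where $N(v)$ is the open neighbourhood of $v$ and $\langle N(v)\rangle$ the subgraph induced by it. *)

theory Defs
  imports Main
begin

text \<open>A finite simple graph: a pair (V, E) of a finite vertex set and a set of
  2-element edges inside V. Vertices are natural numbers (any finite graph is
  isomorphic to one of these).\<close>

type_synonym ugraph = "nat set \<times> nat set set"

definition verts :: "ugraph \<Rightarrow> nat set" where "verts G = fst G"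
definition edges :: "ugraph \<Rightarrow> nat set set" where "edges G = snd G"

definition finite_simple_graph :: "ugraph \<Rightarrow> bool" where
  "finite_simple_graph G \<longleftrightarrow> finite (verts G) \<and>
     (\<forall>e\<in>edges G. \<exists>u v. e = {u, v} \<and> u \<noteq> v \<and> u \<in> verts G \<and> v \<in> verts G)"

definition nbhd :: "ugraph \<Rightarrow> nat \<Rightarrow> nat set" where
  "nbhd G v = {u \<in> verts G. {u, v} \<in> edges G}"

definition degree :: "ugraph \<Rightarrow> nat \<Rightarrow> nat" where
  "degree G v = card (nbhd G v)"

definition min_degree :: "ugraph \<Rightarrow> nat" where
  "min_degree G = Min (degree G ` verts G)"

definition connected :: "ugraph \<Rightarrow> bool" where
  "connected G \<longleftrightarrow> (\<forall>u\<in>verts G. \<forall>v\<in>verts G.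
     (u, v) \<in> {(x, y). {x, y} \<in> edges G}\<^sup>*)"

definition edge_connectivity :: "ugraph \<Rightarrow> nat" where
  "edge_connectivity G = (LEAST k. \<exists>F \<subseteq> edges G. card F = k \<and>
      \<not> connected (verts G, edges G - F))"

definition local_degree :: "ugraph \<Rightarrow> nat \<Rightarrow> nat \<Rightarrow> nat" where
  "local_degree G v u = card {x \<in> nbhd G v. {u, x} \<in> edges G}"

definition locally_ore :: "ugraph \<Rightarrow> bool" where
  "locally_ore G \<longleftrightarrow> (\<forall>v\<in>verts G. \<forall>u\<in>nbhd G v. \<forall>w\<in>nbhd G v.
     u \<noteq> w \<longrightarrow> {u, w} \<notin> edges G \<longrightarrow>
     local_degree G v u + local_degree G v w \<ge> degree G v)"

definition graph_iso :: "ugraph \<Rightarrow> ugraph \<Rightarrow> bool" where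
  "graph_iso G H \<longleftrightarrow> (\<exists>f. bij_betw f (verts G) (verts H) \<and>
     (\<forall>u\<in>verts G. \<forall>v\<in>verts G. {u, v} \<in> edges G \<longleftrightarrow> {f u, f v} \<in> edges H))"

end

theory Submission imports Defs begin

text \<open>Join two disjoint copies of \<open>K\<^sub>n\<close> by a \<open>K\<^sub>3\<^sub>,\<^sub>3\<close> between three vertices of
  each. The nine bridging edges form a cut, so \<open>\<lambda> \<le> 9 < n - 1 \<le> \<delta>\<close> once \<open>n \<ge> 11\<close>.
  Two neighbours \<open>u, w\<close> of \<open>v\<close> are non-adjacent only if \<open>v\<close> is a bridge vertex,
  \<open>u\<close> lies in the clique of \<open>v\<close> and \<open>w\<close> is a bridge vertex of the other clique;
  inside \<open>N(v)\<close>, \<open>u\<close> sees the \<open>n - 2\<close> other clique vertices and \<open>w\<close> the four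
  other bridge vertices, together \<open>n + 2 = deg v\<close>.\<close>

abbreviation edge_rel :: "ugraph \<Rightarrow> (nat \<times> nat) set" where
  "edge_rel G \<equiv> {(x, y). {x, y} \<in> edges G}"

lemma verts_pair [simp]: "verts (V, E) = V"
  by (simp add: verts_def)

lemma edges_pair [simp]: "edges (V, E) = E"
  by (simp add: edges_def)

lemma edge_rel_rtrancl_sym:
  assumes "(x, y) \<in> (edge_rel G)\<^sup>*"
  shows "(y, x) \<in> (edge_rel G)\<^sup>*"
proof -
  have "sym (edge_rel G)" by (rule symI) (simp add: insert_commute)
  from sym_rtrancl[OF this] assms show ?thesis
    by (rule symD)
qed

lemma connected_if_all_reach:
  assumes "\<forall>u\<in>verts G. (u, h) \<in> (edge_rel G)\<^sup>*"
  shows "connected G"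
  unfolding connected_def
proof (intro ballI)
  fix u v assume "u \<in> verts G" "v \<in> verts G"
  with assms have "(u, h) \<in> (edge_rel G)\<^sup>*" "(h, v) \<in> (edge_rel G)\<^sup>*"
    by (auto intro: edge_rel_rtrancl_sym)
  then show "(u, v) \<in> (edge_rel G)\<^sup>*" by (rule rtrancl_trans)
qed

lemma not_connected_if_no_crossing_edge:
  assumes "a \<in> verts G" "b \<in> verts G" "a \<in> A" "b \<notin> A"
    and "\<And>x y. {x, y} \<in> edges G \<Longrightarrow> x \<in> A \<longleftrightarrow> y \<in> A"
  shows "\<not> connected G"
proof -
  have "x \<in> A \<longleftrightarrow> y \<in> A" if "(x, y) \<in> (edge_rel G)\<^sup>*" for x y
    using that by induction (auto dest: assms(5))
  then show ?thesis
    unfolding connected_def using assms(1-4) by blast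
qed

lemma edge_connectivity_le_cut:
  assumes "F \<subseteq> edges G" "\<not> connected (verts G, edges G - F)"
  shows "edge_connectivity G \<le> card F"
  unfolding edge_connectivity_def using assms by (intro Least_le) blast

lemma min_degree_ge:
  assumes "finite (verts G)" "verts G \<noteq> {}" "\<And>v. v \<in> verts G \<Longrightarrow> d \<le> degree G v"
  shows "d \<le> min_degree G"
  unfolding min_degree_def using assms by simp

lemma graph_iso_card_verts: "graph_iso G H \<Longrightarrow> card (verts G) = card (verts H)"
  unfolding graph_iso_def by (auto dest: bij_betw_same_card)

definition bridge :: "nat \<Rightarrow> nat set" where
  "bridge n = {0, 1, 2, n, n + 1, n + 2}"

definition twin_adj :: "nat \<Rightarrow> nat \<Rightarrow> nat \<Rightarrow> bool" where
  "twin_adj n u v \<longleftrightarrow> u \<noteq> v \<and> u < 2 * n \<and> v < 2 * n \<and>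
     ((u < n \<longleftrightarrow> v < n) \<or> u \<in> bridge n \<and> v \<in> bridge n)"

definition twin_cliques :: "nat \<Rightarrow> ugraph" where
  "twin_cliques n = ({0..<2 * n}, {{u, v} | u v. twin_adj n u v})"

definition clique_of :: "nat \<Rightarrow> nat \<Rightarrow> nat set" where
  "clique_of n v = {y. y < 2 * n \<and> (y < n \<longleftrightarrow> v < n)}"

lemma twin_adj_sym: "twin_adj n u v = twin_adj n v u"
  unfolding twin_adj_def by auto

lemma verts_twin_cliques [simp]: "verts (twin_cliques n) = {0..<2 * n}"
  by (simp add: twin_cliques_def)

lemma edge_twin_cliques_iff [simp]: "{x, y} \<in> edges (twin_cliques n) \<longleftrightarrow> twin_adj n x y"
  unfolding twin_cliques_def by (auto simp: doubleton_eq_iff twin_adj_sym)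

lemma nbhd_twin_cliques: "nbhd (twin_cliques n) v = {u. twin_adj n u v}"
  unfolding nbhd_def by (auto simp: twin_adj_def)

lemma finite_nbhd_twin_cliques: "finite (nbhd (twin_cliques n) v)"
  by (rule finite_subset[of _ "{..<2 * n}"]) (auto simp: nbhd_twin_cliques twin_adj_def)

lemma clique_of_eq: "v < 2 * n \<Longrightarrow> clique_of n v = (if v < n then {0..<n} else {n..<2 * n})"
  by (auto simp: clique_of_def)

lemma card_clique_of: "v < 2 * n \<Longrightarrow> card (clique_of n v) = n"
  by (simp add: clique_of_eq)

lemma finite_simple_graph_twin_cliques: "finite_simple_graph (twin_cliques n)"
  unfolding finite_simple_graph_def by (auto simp: twin_cliques_def twin_adj_def)

lemma connected_twin_cliques:
  assumes "n \<ge> 3"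
  shows "connected (twin_cliques n)"
proof (rule connected_if_all_reach[where h = 0], intro ballI)
  let ?R = "edge_rel (twin_cliques n)"
  fix u assume "u \<in> verts (twin_cliques n)"
  then have u: "u < 2 * n" by simp
  have "(n, 0) \<in> ?R" using assms by (auto simp: twin_adj_def bridge_def)
  moreover have "(u, n) \<in> ?R" if "u \<ge> n" "u \<noteq> n"
    using that u by (auto simp: twin_adj_def)
  moreover have "(u, 0) \<in> ?R" if "u < n" "u \<noteq> 0"
    using that by (auto simp: twin_adj_def)
  ultimately show "(u, 0) \<in> ?R\<^sup>*"
    using u by (cases "u < n"; cases "u = 0"; cases "u = n")
      (auto intro: converse_rtrancl_into_rtrancl)
qed

lemma degree_twin_cliques_ge:
  assumes "v < 2 * n"
  shows "n - 1 \<le> degree (twin_cliques n) v"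
proof -
  have "clique_of n v - {v} \<subseteq> nbhd (twin_cliques n) v"
    using assms by (auto simp: nbhd_twin_cliques twin_adj_def clique_of_def)
  then have "card (clique_of n v - {v}) \<le> degree (twin_cliques n) v"
    unfolding degree_def by (rule card_mono[OF finite_nbhd_twin_cliques])
  moreover have "v \<in> clique_of n v" using assms by (simp add: clique_of_def)
  ultimately show ?thesis using card_clique_of[OF assms] by simp
qed

lemma degree_twin_cliques_le:
  assumes "n \<ge> 3" "v < 2 * n"
  shows "degree (twin_cliques n) v \<le> n + 2"
proof -
  define across where "across = bridge n - clique_of n v"
  have "nbhd (twin_cliques n) v \<subseteq> (clique_of n v - {v}) \<union> across"
    unfolding nbhd_twin_cliques across_def by (auto simp: twin_adj_def clique_of_def)
  then have "degree (twin_cliques n) v \<le> card ((clique_of n v - {v}) \<union> across)"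
    unfolding degree_def by (rule card_mono[rotated]) (simp add: across_def bridge_def clique_of_def)
  also have "\<dots> \<le> card (clique_of n v - {v}) + card across"
    by (rule card_Un_le)
  finally have "degree (twin_cliques n) v \<le> card (clique_of n v - {v}) + card across" .
  moreover have "card across \<le> 3"
    unfolding across_def bridge_def clique_of_def
    by (rule order_trans[OF card_mono[of "if v < n then {n, n + 1, n + 2} else {0, 1, 2}"]])
       (use assms(1) in \<open>auto simp: card_insert_if\<close>)
  ultimately show ?thesis
    using card_clique_of[OF assms(2)] assms(2) by (simp add: clique_of_def)
qed

lemma min_degree_twin_cliques:
  assumes "n \<ge> 1"
  shows "n - 1 \<le> min_degree (twin_cliques n)"
  using assms degree_twin_cliques_ge[of _ n] by (intro min_degree_ge) auto

lemma edge_connectivity_twin_cliques: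
  assumes "n \<ge> 3"
  shows "edge_connectivity (twin_cliques n) \<le> 9"
proof -
  define F where "F = (\<lambda>(a, b). {a, b}) ` ({0, 1, 2} \<times> {n, n + 1, n + 2})"
  have "card F \<le> 9"
    unfolding F_def by (rule order_trans[OF card_image_le]) (auto simp: card_cartesian_product)
  moreover have F: "F \<subseteq> edges (twin_cliques n)"
    unfolding F_def using assms by (auto simp: twin_adj_def bridge_def)
  moreover have "x < n \<longleftrightarrow> y < n" if "{x, y} \<in> edges (twin_cliques n) - F" for x y
  proof (rule ccontr)
    assume "(x < n) \<noteq> (y < n)"
    with that have "x \<in> bridge n" "y \<in> bridge n"
      by (auto simp: twin_adj_def)
    then have "x \<in> {0, 1, 2} \<and> y \<in> {n, n + 1, n + 2} \<or> y \<in> {0, 1, 2} \<and> x \<in> {n, n + 1, n + 2}"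
      using \<open>(x < n) \<noteq> (y < n)\<close> assms by (auto simp: bridge_def)
    moreover have "{x, y} = (\<lambda>(a, b). {a, b}) (x, y)" "{x, y} = (\<lambda>(a, b). {a, b}) (y, x)"
      by (simp_all add: insert_commute)
    ultimately have "{x, y} \<in> F"
      unfolding F_def by (metis SigmaI image_eqI)
    with that show False by simp
  qed
  then have "\<not> connected (verts (twin_cliques n), edges (twin_cliques n) - F)"
    using assms by (intro not_connected_if_no_crossing_edge[where a = 0 and b = n and A = "{..<n}"]) auto
  ultimately show ?thesis
    using edge_connectivity_le_cut[OF F] by simp
qed

lemma local_degree_twin_cliques_clique_mate:
  assumes "v < 2 * n" "x \<in> clique_of n v" "x \<noteq> v"
  shows "n - 2 \<le> local_degree (twin_cliques n) v x"
proof -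
  have "clique_of n v - {v, x} \<subseteq> {y \<in> nbhd (twin_cliques n) v. {x, y} \<in> edges (twin_cliques n)}"
    using assms by (auto simp: nbhd_twin_cliques twin_adj_def clique_of_def)
  then have "card (clique_of n v - {v, x}) \<le> local_degree (twin_cliques n) v x"
    unfolding local_degree_def by (rule card_mono[rotated]) (simp add: finite_nbhd_twin_cliques)
  moreover have "v \<in> clique_of n v" using assms(1) by (simp add: clique_of_def)
  ultimately show ?thesis
    using assms card_clique_of[OF assms(1)] by (simp add: card_Diff_subset)
qed

lemma local_degree_twin_cliques_bridge:
  assumes "n \<ge> 3" "v \<in> bridge n" "b \<in> bridge n" "b \<noteq> v"
  shows "4 \<le> local_degree (twin_cliques n) v b"
proof -
  have "bridge n - {v, b} \<subseteq> {y \<in> nbhd (twin_cliques n) v. {b, y} \<in> edges (twin_cliques n)}"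
    using assms by (auto simp: nbhd_twin_cliques twin_adj_def bridge_def)
  then have "card (bridge n - {v, b}) \<le> local_degree (twin_cliques n) v b"
    unfolding local_degree_def by (rule card_mono[rotated]) (simp add: finite_nbhd_twin_cliques)
  moreover have "card (bridge n) = 6" using assms(1) by (simp add: bridge_def)
  ultimately show ?thesis
    using assms(2-4) by (simp add: card_Diff_subset)
qed

lemma ore_inequality_twin_cliques:
  assumes "n \<ge> 3" "twin_adj n u v" "twin_adj n w v" "\<not> twin_adj n u w" "u \<noteq> w"
    and "u \<in> clique_of n v"
  shows "degree (twin_cliques n) v \<le> local_degree (twin_cliques n) v u + local_degree (twin_cliques n) v w"
proof -
  have v: "v < 2 * n" and "u \<noteq> v" using assms(2) by (auto simp: twin_adj_def)
  have "(w < n) \<noteq> (v < n)"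
    using assms(2-6) by (auto simp: twin_adj_def clique_of_def)
  then have "v \<in> bridge n" "w \<in> bridge n" "w \<noteq> v"
    using assms(3) by (auto simp: twin_adj_def)
  then have "4 \<le> local_degree (twin_cliques n) v w"
    by (rule local_degree_twin_cliques_bridge[OF assms(1)])
  moreover have "n - 2 \<le> local_degree (twin_cliques n) v u"
    using v assms(6) \<open>u \<noteq> v\<close> by (rule local_degree_twin_cliques_clique_mate)
  moreover have "degree (twin_cliques n) v \<le> n + 2"
    using assms(1) v by (rule degree_twin_cliques_le)
  ultimately show ?thesis using assms(1) by linarith
qed

lemma locally_ore_twin_cliques:
  assumes "n \<ge> 3"
  shows "locally_ore (twin_cliques n)"
  unfolding locally_ore_def
proof (intro ballI impI)
  fix v u w
  assume "u \<in> nbhd (twin_cliques n) v" "w \<in> nbhd (twin_cliques n) v" "u \<noteq> w"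
    "{u, w} \<notin> edges (twin_cliques n)"
  then have uv: "twin_adj n u v" and wv: "twin_adj n w v" and uw: "\<not> twin_adj n u w"
    by (auto simp: nbhd_twin_cliques)
  show "degree (twin_cliques n) v \<le> local_degree (twin_cliques n) v u + local_degree (twin_cliques n) v w"
  proof (cases "u \<in> clique_of n v")
    case True
    with assms uv wv uw \<open>u \<noteq> w\<close> show ?thesis by (rule ore_inequality_twin_cliques)
  next
    case False
    then have "w \<in> clique_of n v"
      using uv wv uw \<open>u \<noteq> w\<close> by (auto simp: twin_adj_def clique_of_def)
    with assms wv uv uw \<open>u \<noteq> w\<close> show ?thesis
      using ore_inequality_twin_cliques[of n w v u] by (simp add: twin_adj_sym add.commute)
  qed
qed

theorem mainTheorem11:
  shows "\<exists>S :: ugraph set. infinite S \<and>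
    (\<forall>G\<in>S. finite_simple_graph G \<and> connected G \<and> locally_ore G \<and>
              edge_connectivity G \<noteq> min_degree G) \<and>
    (\<forall>G\<in>S. \<forall>H\<in>S. G \<noteq> H \<longrightarrow> \<not> graph_iso G H)"
proof (intro exI[of _ "twin_cliques ` {11..}"] conjI ballI impI)
  have "inj_on twin_cliques {11..}"
    by (rule inj_onI) (metis verts_twin_cliques card_atLeastLessThan diff_zero mult_cancel1 zero_neq_numeral)
  then show "infinite (twin_cliques ` {11..})"
    using infinite_Ici by (auto dest: finite_imageD)
next
  fix G assume "G \<in> twin_cliques ` {11..}"
  then obtain n where n: "n \<ge> 11" and G: "G = twin_cliques n" by auto
  show "finite_simple_graph G" "connected G" "locally_ore G"
    using n by (simp_all add: G finite_simple_graph_twin_cliques connected_twin_cliques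
        locally_ore_twin_cliques)
  show "edge_connectivity G \<noteq> min_degree G"
    using edge_connectivity_twin_cliques[of n] min_degree_twin_cliques[of n] n G by simp
next
  fix G H assume "G \<in> twin_cliques ` {11..}" "H \<in> twin_cliques ` {11..}" "G \<noteq> H"
  then obtain n m where "G = twin_cliques n" "H = twin_cliques m" "n \<noteq> m" by auto
  then show "\<not> graph_iso G H"
    by (auto dest: graph_iso_card_verts)
qed

end
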